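(* Let $p>1$. A scheduling policy $\eta$ is a $p$-approximation policy if it schedules jobs solely based on the requirements $[q^*_X]$ and the state $[d_X(k) : X\in S]$ of the system, and, for every frame $k$, $$\sum_{X\in S}\tilde q_X(k)\,d_X(k)\ \ge\ \frac{1}{p}\ \max_{[q_X]\text{ feasible}}\ \sum_{X\in S} q_X\, d_X(k).$$
   Context: A system consists of a finite set $S$ of tasks. Time is slotted, $t\in\{0,1,2,\dots\}$. Each task $X\in S$ has a period $\tau_X$ (a positive integer); time is partitioned into consecutive periods of $X$ of $\tau_X$ slots each, the first starting at $t=0$, and in each period $X$ has one job, removed at the end of the period. Let $T=\mathrm{lcm}\{\tau_X : X\in S\}$; time is partitioned into consecutive frames of $T$ slots each, the $k$-th frame ($k=1,2,\dots$) being the $k$-th such block starting from $t=0$. A scheduling policy (possibly randomized) chooses in each slot either to idle or to execute the job of exactly one task. Each task $X$ has rewards $r^1_X\ge r^2_X\ge\dots\ge r^{\tau_X}_X\ge 0$: executing the job of $X$ for the $i$-th time within a period yields reward $r^i_X$ to $X$. Let $s_X(t)$ be the total reward obtained by $X$ between time 0 and $t$; the average reward is $q_X=\liminf_{t\to\infty}s_X(t)/(t/T)$. Each task has a minimum requirement $q^*_X>0$; a policy fulfills the system if $q_X\ge q^*_X$ with probability 1 for all $X\in S$. The system (with requirements $[q^*_X]$) is feasible if some policy fulfills it, and strictly feasible if there is $\epsilon>0$ such that the same system with requirements $[(1+\epsilon)q^*_X]$ is feasible. A vector $[q_X : X\in S]$ is called feasible if the system with the same tasks, periods and rewards and requirements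 $[q_X]$ is feasible. For $p\ge 1$, a policy is a $p$-approximation policy if it fulfills every system with requirements $[q^*_X]$ such that the same system with requirements $[p\,q^*_X]$ is strictly feasible. Let $\tilde q_X(k)$ be the total reward obtained by $X$ during the $k$-th frame. The debt of $X$ is $d_X(0)=0$, $d_X(k)=[d_X(k-1)+q^*_X-\tilde q_X(k)]^+$ for $k>0$, with $[x]^+=\max\{x,0\}$; the state of the system at frame $k$ is $[d_X(k) : X\in S]$. *)

theory Defs
  imports "HOL-Probability.Probability"
begin

text \<open>A schedule assigns to every slot t either None (idle) or Some X (execute the job of X).
  Tasks: set S; periods tau; rewards r X i for the i-th execution (i = 1..tau X) within a period.\<close>

type_synonym 'a schedule = "nat \<Rightarrow> 'a option"

definition frame_len :: "'a set \<Rightarrow> ('a \<Rightarrow> nat) \<Rightarrow> nat" where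
  "frame_len S tau = Lcm (tau ` S)"

definition valid_sched :: "'a set \<Rightarrow> 'a schedule \<Rightarrow> bool" where
  "valid_sched S \<sigma> \<longleftrightarrow> (\<forall>t. \<sigma> t = None \<or> (\<exists>X\<in>S. \<sigma> t = Some X))"

definition exec_count :: "('a \<Rightarrow> nat) \<Rightarrow> 'a schedule \<Rightarrow> 'a \<Rightarrow> nat \<Rightarrow> nat" where
  "exec_count tau \<sigma> X t = card {t'. t' \<le> t \<and> t' div tau X = t div tau X \<and> \<sigma> t' = Some X}"

definition slot_reward :: "('a \<Rightarrow> nat) \<Rightarrow> ('a \<Rightarrow> nat \<Rightarrow> real) \<Rightarrow> 'a schedule \<Rightarrow> 'a \<Rightarrow> nat \<Rightarrow> real" where
  "slot_reward tau r \<sigma> X t = (if \<sigma> t = Some X then r X (exec_count tau \<sigma> X t) else 0)"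

definition cum_reward :: "('a \<Rightarrow> nat) \<Rightarrow> ('a \<Rightarrow> nat \<Rightarrow> real) \<Rightarrow> 'a schedule \<Rightarrow> 'a \<Rightarrow> nat \<Rightarrow> real" where
  "cum_reward tau r \<sigma> X t = (\<Sum>t'<t. slot_reward tau r \<sigma> X t')"

definition avg_reward :: "'a set \<Rightarrow> ('a \<Rightarrow> nat) \<Rightarrow> ('a \<Rightarrow> nat \<Rightarrow> real) \<Rightarrow> 'a schedule \<Rightarrow> 'a \<Rightarrow> ereal" where
  "avg_reward S tau r \<sigma> X =
     liminf (\<lambda>t. ereal (cum_reward tau r \<sigma> X t / (real t / real (frame_len S tau))))"

definition frame_reward :: "'a set \<Rightarrow> ('a \<Rightarrow> nat) \<Rightarrow> ('a \<Rightarrow> nat \<Rightarrow> real) \<Rightarrow> 'a schedule \<Rightarrow> 'a \<Rightarrow> nat \<Rightarrow> real" where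
  "frame_reward S tau r \<sigma> X k =
     (\<Sum>t\<in>{(k - 1) * frame_len S tau ..< k * frame_len S tau}. slot_reward tau r \<sigma> X t)"

primrec debt :: "'a set \<Rightarrow> ('a \<Rightarrow> nat) \<Rightarrow> ('a \<Rightarrow> nat \<Rightarrow> real) \<Rightarrow> ('a \<Rightarrow> real) \<Rightarrow> 'a schedule \<Rightarrow> 'a \<Rightarrow> nat \<Rightarrow> real" where
  "debt S tau r q \<sigma> X 0 = 0"
| "debt S tau r q \<sigma> X (Suc k) = max 0 (debt S tau r q \<sigma> X k + q X - frame_reward S tau r \<sigma> X (Suc k))"

definition sys_state :: "'a set \<Rightarrow> ('a \<Rightarrow> nat) \<Rightarrow> ('a \<Rightarrow> nat \<Rightarrow> real) \<Rightarrow> ('a \<Rightarrow> real) \<Rightarrow> 'a schedule \<Rightarrow> nat \<Rightarrow> 'a \<Rightarrow> real" where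
  "sys_state S tau r q \<sigma> k = (\<lambda>X. if X \<in> S then debt S tau r q \<sigma> X k else 0)"

text \<open>The measurable space of (infinite) schedules; a (possibly randomized) policy is
  identified with the law of the schedule it produces.\<close>
definition sched_space :: "'a schedule measure" where
  "sched_space = Pi\<^sub>M UNIV (\<lambda>_::nat. count_space (UNIV :: 'a option set))"

definition fulfills_law :: "'a set \<Rightarrow> ('a \<Rightarrow> nat) \<Rightarrow> ('a \<Rightarrow> nat \<Rightarrow> real) \<Rightarrow> ('a \<Rightarrow> real) \<Rightarrow> 'a schedule measure \<Rightarrow> bool" where
  "fulfills_law S tau r q M \<longleftrightarrow>
     (AE \<sigma> in M. \<forall>X\<in>S. ereal (q X) \<le> avg_reward S tau r \<sigma> X)"

definition feasible :: "'a set \<Rightarrow> ('a \<Rightarrow> nat) \<Rightarrow> ('a \<Rightarrow> nat \<Rightarrow> real) \<Rightarrow> ('a \<Rightarrow> real) \<Rightarrow> bool" where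
  "feasible S tau r q \<longleftrightarrow>
     (\<exists>M. prob_space M \<and> sets M = sets sched_space \<and>
          (AE \<sigma> in M. valid_sched S \<sigma>) \<and> fulfills_law S tau r q M)"

definition strictly_feasible :: "'a set \<Rightarrow> ('a \<Rightarrow> nat) \<Rightarrow> ('a \<Rightarrow> nat \<Rightarrow> real) \<Rightarrow> ('a \<Rightarrow> real) \<Rightarrow> bool" where
  "strictly_feasible S tau r q \<longleftrightarrow> (\<exists>\<epsilon>>0. feasible S tau r (\<lambda>X. (1 + \<epsilon>) * q X))"

definition feasible_vec :: "'a set \<Rightarrow> ('a \<Rightarrow> nat) \<Rightarrow> ('a \<Rightarrow> nat \<Rightarrow> real) \<Rightarrow> ('a \<Rightarrow> real) \<Rightarrow> bool" where
  "feasible_vec S tau r q \<longleftrightarrow> (\<forall>X\<in>S. q X > 0) \<and> feasible S tau r q"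

text \<open>State-based policy: eta q d is the (random) schedule used within the next frame
  (slot i of the frame, i < T), given requirements q and current state d.\<close>
definition state_policy_wf :: "'a set \<Rightarrow> ('a \<Rightarrow> nat) \<Rightarrow> (('a \<Rightarrow> real) \<Rightarrow> ('a \<Rightarrow> real) \<Rightarrow> 'a schedule pmf) \<Rightarrow> bool" where
  "state_policy_wf S tau \<eta> \<longleftrightarrow>
     (\<forall>q d F. F \<in> set_pmf (\<eta> q d) \<longrightarrow>
        (\<forall>i. frame_len S tau \<le> i \<longrightarrow> F i = None) \<and>
        (\<forall>i. F i = None \<or> (\<exists>X\<in>S. F i = Some X)))"

definition realizable :: "'a set \<Rightarrow> ('a \<Rightarrow> nat) \<Rightarrow> ('a \<Rightarrow> nat \<Rightarrow> real) \<Rightarrow>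
    (('a \<Rightarrow> real) \<Rightarrow> ('a \<Rightarrow> real) \<Rightarrow> 'a schedule pmf) \<Rightarrow> ('a \<Rightarrow> real) \<Rightarrow> 'a schedule \<Rightarrow> bool" where
  "realizable S tau r \<eta> q \<sigma> \<longleftrightarrow>
     (\<forall>k. (\<lambda>i. if i < frame_len S tau then \<sigma> (k * frame_len S tau + i) else None)
            \<in> set_pmf (\<eta> q (sys_state S tau r q \<sigma> k)))"

text \<open>eta fulfills the system with requirements q: every law of the schedule produced by
  eta (i.e. every probability law on schedules supported on eta-realizable paths)
  fulfills q almost surely.\<close>
definition policy_fulfills :: "'a set \<Rightarrow> ('a \<Rightarrow> nat) \<Rightarrow> ('a \<Rightarrow> nat \<Rightarrow> real) \<Rightarrow>
    (('a \<Rightarrow> real) \<Rightarrow> ('a \<Rightarrow> real) \<Rightarrow> 'a schedule pmf) \<Rightarrow> ('a \<Rightarrow> real) \<Rightarrow> bool" where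
  "policy_fulfills S tau r \<eta> q \<longleftrightarrow>
     (\<forall>M. prob_space M \<and> sets M = sets sched_space \<and> (AE \<sigma> in M. realizable S tau r \<eta> q \<sigma>)
          \<longrightarrow> fulfills_law S tau r q M)"

definition p_approximation :: "'a set \<Rightarrow> ('a \<Rightarrow> nat) \<Rightarrow> ('a \<Rightarrow> nat \<Rightarrow> real) \<Rightarrow> real \<Rightarrow>
    (('a \<Rightarrow> real) \<Rightarrow> ('a \<Rightarrow> real) \<Rightarrow> 'a schedule pmf) \<Rightarrow> bool" where
  "p_approximation S tau r p \<eta> \<longleftrightarrow>
     (\<forall>q. (\<forall>X\<in>S. q X > 0) \<longrightarrow> strictly_feasible S tau r (\<lambda>X. p * q X) \<longrightarrow>
          policy_fulfills S tau r \<eta> q)"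

end

theory Submission
  imports Defs
begin

text \<open>Given requirements q, take \<epsilon> > 0 such that (1 + \<epsilon>) p q is feasible. The approximation
  inequality, applied to this feasible vector, gives for every frame k
  \<Sum>X. reward_X(k+1) d_X(k) \<ge> (1 + \<epsilon>) \<Sum>X. q_X d_X(k). Hence the quadratic Lyapunov function
  L(k) = \<Sum>X. d_X(k)^2 has drift at most a constant minus 2\<epsilon> \<Sum>X. q_X d_X(k), which is negative
  once the debts are large, so L and therefore all debts stay bounded on every realizable path.
  Bounded debt means that after k frames X has collected at least k q_X - D, so its average
  reward is at least q_X.\<close>

lemma exec_count_bounds:
  assumes "tau X > 0" "\<sigma> t = Some X"
  shows "1 \<le> exec_count tau \<sigma> X t" "exec_count tau \<sigma> X t \<le> tau X"
proof -
  let ?A = "{t'. t' \<le> t \<and> t' div tau X = t div tau X \<and> \<sigma> t' = Some X}"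
  let ?m = "t div tau X"
  have period: "?A \<subseteq> {?m * tau X ..< ?m * tau X + tau X}"
  proof
    fix t' assume "t' \<in> ?A"
    then have "t' div tau X = ?m" by auto
    then show "t' \<in> {?m * tau X ..< ?m * tau X + tau X}"
      using assms(1) div_times_less_eq_dividend[of t' "tau X"]
      by (metis atLeastLessThan_iff div_mult_mod_eq mod_less_divisor nat_add_left_cancel_less)
  qed
  then have fin: "finite ?A" by (rule finite_subset) simp
  have "t \<in> ?A" using assms by auto
  with fin have "card ?A \<ge> 1" using card_0_eq[OF fin] by fastforce
  moreover have "card ?A \<le> tau X" using card_mono[OF _ period] by simp
  ultimately show "1 \<le> exec_count tau \<sigma> X t" "exec_count tau \<sigma> X t \<le> tau X"
    unfolding exec_count_def by simp_all
qed

lemma slot_reward_bounds: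
  assumes "tau X > 0"
    and mono: "\<forall>i j. 1 \<le> i \<longrightarrow> i \<le> j \<longrightarrow> j \<le> tau X \<longrightarrow> r X j \<le> r X i"
    and nonneg: "\<forall>i. 1 \<le> i \<longrightarrow> i \<le> tau X \<longrightarrow> 0 \<le> r X i"
  shows "0 \<le> slot_reward tau r \<sigma> X t" "slot_reward tau r \<sigma> X t \<le> r X 1"
proof -
  have "0 \<le> r X 1" using nonneg assms(1) by simp
  moreover have "0 \<le> r X (exec_count tau \<sigma> X t) \<and> r X (exec_count tau \<sigma> X t) \<le> r X 1"
    if "\<sigma> t = Some X"
    using exec_count_bounds[of tau X \<sigma> t, OF assms(1) that] mono nonneg by simp
  ultimately show "0 \<le> slot_reward tau r \<sigma> X t" "slot_reward tau r \<sigma> X t \<le> r X 1"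
    unfolding slot_reward_def by auto
qed

lemma frame_len_pos:
  assumes "finite S" "\<forall>X\<in>S. tau X > 0"
  shows "frame_len S tau > 0"
  using assms Lcm_0_iff_nat[of "tau ` S"] unfolding frame_len_def by fastforce

lemma frame_reward_bounds:
  assumes "tau X > 0"
    and "\<forall>i j. 1 \<le> i \<longrightarrow> i \<le> j \<longrightarrow> j \<le> tau X \<longrightarrow> r X j \<le> r X i"
    and "\<forall>i. 1 \<le> i \<longrightarrow> i \<le> tau X \<longrightarrow> 0 \<le> r X i"
  shows "0 \<le> frame_reward S tau r \<sigma> X k"
    and "frame_reward S tau r \<sigma> X k \<le> real (frame_len S tau) * r X 1"
proof -
  let ?T = "frame_len S tau"
  note slot = slot_reward_bounds[of tau X r \<sigma>, OF assms]
  show "0 \<le> frame_reward S tau r \<sigma> X k"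
    unfolding frame_reward_def by (rule sum_nonneg) (use slot in auto)
  have "frame_reward S tau r \<sigma> X k \<le> (\<Sum>t\<in>{(k - 1) * ?T ..< k * ?T}. r X 1)"
    unfolding frame_reward_def by (rule sum_mono) (use slot in auto)
  also have "\<dots> \<le> real ?T * r X 1"
    using slot(1)[of 0] slot(2)[of 0] by (cases k) (simp_all add: algebra_simps)
  finally show "frame_reward S tau r \<sigma> X k \<le> real ?T * r X 1" .
qed

lemma cum_reward_frames:
  "cum_reward tau r \<sigma> X (k * frame_len S tau) = (\<Sum>j = 1..k. frame_reward S tau r \<sigma> X j)"
proof (induction k)
  case 0
  then show ?case by (simp add: cum_reward_def)
next
  case (Suc k)
  let ?T = "frame_len S tau"
  have "cum_reward tau r \<sigma> X (Suc k * ?T)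
      = cum_reward tau r \<sigma> X (k * ?T) + frame_reward S tau r \<sigma> X (Suc k)"
    unfolding cum_reward_def frame_reward_def lessThan_atLeast0
    by (simp add: sum.atLeastLessThan_concat add.commute)
  with Suc show ?case by simp
qed

lemma avg_reward_le:
  assumes "frame_len S tau > 0" "tau X > 0"
    and "\<forall>i j. 1 \<le> i \<longrightarrow> i \<le> j \<longrightarrow> j \<le> tau X \<longrightarrow> r X j \<le> r X i"
    and "\<forall>i. 1 \<le> i \<longrightarrow> i \<le> tau X \<longrightarrow> 0 \<le> r X i"
  shows "avg_reward S tau r \<sigma> X \<le> ereal (real (frame_len S tau) * r X 1)"
proof -
  let ?T = "frame_len S tau"
  note slot = slot_reward_bounds[of tau X r \<sigma>, OF assms(2-4)]
  have ratio: "cum_reward tau r \<sigma> X t / (real t / real ?T) \<le> real ?T * r X 1" for t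
  proof (cases "t = 0")
    case True
    then show ?thesis using slot(1)[of 0] slot(2)[of 0] by simp
  next
    case False
    have "cum_reward tau r \<sigma> X t \<le> (\<Sum>t'<t. r X 1)"
      unfolding cum_reward_def by (rule sum_mono) (use slot in auto)
    then have "cum_reward tau r \<sigma> X t * real ?T \<le> real t * r X 1 * real ?T"
      by (simp add: mult_right_mono)
    then show ?thesis using False by (simp add: field_simps)
  qed
  have "avg_reward S tau r \<sigma> X \<le> liminf (\<lambda>t. ereal (real ?T * r X 1))"
    unfolding avg_reward_def using ratio by (intro Liminf_mono always_eventually allI) simp
  then show ?thesis by (simp add: Liminf_const)
qed

text \<open>A feasible vector is fulfilled almost surely, hence by at least one schedule.\<close>

lemma feasible_le_frame_bound:
  assumes "frame_len S tau > 0" "X \<in> S" "tau X > 0"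
    and "\<forall>i j. 1 \<le> i \<longrightarrow> i \<le> j \<longrightarrow> j \<le> tau X \<longrightarrow> r X j \<le> r X i"
    and "\<forall>i. 1 \<le> i \<longrightarrow> i \<le> tau X \<longrightarrow> 0 \<le> r X i"
    and "feasible S tau r v"
  shows "v X \<le> real (frame_len S tau) * r X 1"
proof -
  obtain M where M: "prob_space M"
    and ae: "AE \<sigma> in M. \<forall>X\<in>S. ereal (v X) \<le> avg_reward S tau r \<sigma> X"
    using assms(6) unfolding feasible_def fulfills_law_def by blast
  have "\<exists>\<sigma>. \<forall>X\<in>S. ereal (v X) \<le> avg_reward S tau r \<sigma> X"
  proof (rule ccontr)
    assume "\<nexists>\<sigma>. \<forall>X\<in>S. ereal (v X) \<le> avg_reward S tau r \<sigma> X"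
    from ae have "AE \<sigma> in M. False" by (rule eventually_mono) (use \<open>\<nexists>\<sigma>. _\<close> in blast)
    then show False using prob_space.AE_False[OF M] by simp
  qed
  then obtain \<sigma> where "\<forall>X\<in>S. ereal (v X) \<le> avg_reward S tau r \<sigma> X" ..
  then have "ereal (v X) \<le> ereal (real (frame_len S tau) * r X 1)"
    using assms(2) avg_reward_le[of S tau X r \<sigma>, OF assms(1,3-5)] by (meson order_trans)
  then show ?thesis by simp
qed

lemma debt_nonneg: "0 \<le> debt S tau r q \<sigma> X k"
  by (cases k) auto

lemma debt_ge:
  "real k * q X - (\<Sum>j = 1..k. frame_reward S tau r \<sigma> X j) \<le> debt S tau r q \<sigma> X k"
  by (induction k) (simp_all add: algebra_simps)

lemma power2_max_0_le:
  fixes x a b c :: real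
  assumes "0 \<le> a" "0 \<le> b" "b \<le> c"
  shows "(max 0 (x + a - b))\<^sup>2 \<le> x\<^sup>2 + 2 * (x * a - b * x) + (a + c)\<^sup>2"
proof -
  have "(max 0 (x + a - b))\<^sup>2 \<le> (x + a - b)\<^sup>2"
    by (cases "0 \<le> x + a - b") (auto simp: max_def)
  also have "\<dots> = x\<^sup>2 + 2 * (x * a - b * x) + (a - b)\<^sup>2"
    by (simp add: power2_eq_square algebra_simps)
  also have "(a - b)\<^sup>2 \<le> (a + c)\<^sup>2"
    using assms by (intro abs_le_square_iff[THEN iffD1]) auto
  finally show ?thesis by simp
qed

lemma sum_power2_queue_step:
  fixes d q g G :: "'a \<Rightarrow> real"
  assumes "\<And>X. X \<in> S \<Longrightarrow> 0 \<le> q X" and "\<And>X. X \<in> S \<Longrightarrow> 0 \<le> g X \<and> g X \<le> G X"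
  shows "(\<Sum>X\<in>S. (max 0 (d X + q X - g X))\<^sup>2)
    \<le> (\<Sum>X\<in>S. (d X)\<^sup>2) + 2 * ((\<Sum>X\<in>S. q X * d X) - (\<Sum>X\<in>S. g X * d X))
       + (\<Sum>X\<in>S. (q X + G X)\<^sup>2)"
proof -
  have "(\<Sum>X\<in>S. (max 0 (d X + q X - g X))\<^sup>2)
      \<le> (\<Sum>X\<in>S. (d X)\<^sup>2 + 2 * (d X * q X - g X * d X) + (q X + G X)\<^sup>2)"
    using assms by (intro sum_mono power2_max_0_le) auto
  also have "\<dots> = (\<Sum>X\<in>S. (d X)\<^sup>2) + 2 * ((\<Sum>X\<in>S. q X * d X) - (\<Sum>X\<in>S. g X * d X))
       + (\<Sum>X\<in>S. (q X + G X)\<^sup>2)"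
    by (simp add: sum.distrib sum_subtractf sum_distrib_left algebra_simps)
  finally show ?thesis .
qed

lemma queues_bounded_of_drift:
  fixes d g :: "'a \<Rightarrow> nat \<Rightarrow> real" and q G :: "'a \<Rightarrow> real" and \<epsilon> :: real
  assumes fin: "finite S"
    and d0: "\<And>X. d X 0 = 0"
    and dSuc: "\<And>X k. d X (Suc k) = max 0 (d X k + q X - g X k)"
    and g: "\<And>X k. X \<in> S \<Longrightarrow> 0 \<le> g X k \<and> g X k \<le> G X"
    and q: "\<And>X. X \<in> S \<Longrightarrow> q X > 0"
    and \<epsilon>: "\<epsilon> > 0"
    and drift: "\<And>k. (1 + \<epsilon>) * (\<Sum>X\<in>S. q X * d X k) \<le> (\<Sum>X\<in>S. g X k * d X k)"
  obtains D where "\<And>k X. X \<in> S \<Longrightarrow> d X k \<le> D"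
proof -
  have d_nonneg: "0 \<le> d X k" for X k by (cases k) (auto simp: d0 dSuc)
  define L where "L k = (\<Sum>X\<in>S. (d X k)\<^sup>2)" for k
  define W where "W k = (\<Sum>X\<in>S. q X * d X k)" for k
  define B where "B = (\<Sum>X\<in>S. (q X + G X)\<^sup>2)"
  define K where "K = B / (2 * \<epsilon>)"
  define C where "C = (\<Sum>X\<in>S. (K / q X)\<^sup>2) + B"
  have W_nonneg: "0 \<le> W k" for k
    unfolding W_def by (rule sum_nonneg) (simp add: d_nonneg q less_imp_le)
  have L_step: "L (Suc k) \<le> L k - 2 * \<epsilon> * W k + B" for k
  proof -
    have "L (Suc k) \<le> L k + 2 * (W k - (\<Sum>X\<in>S. g X k * d X k)) + B"
      unfolding L_def W_def B_def dSuc
      by (rule sum_power2_queue_step) (use g q in \<open>auto simp: less_imp_le\<close>)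
    then show ?thesis using drift[of k] unfolding W_def by (simp add: algebra_simps)
  qed
  have L_small: "L k \<le> C - B" if "W k < K" for k
    unfolding L_def C_def
  proof (simp, rule sum_mono)
    fix X assume X: "X \<in> S"
    have "q X * d X k \<le> W k"
      unfolding W_def using X fin by (intro member_le_sum) (auto simp: d_nonneg q less_imp_le)
    then have "d X k \<le> K / q X" using that q[OF X] by (simp add: field_simps)
    then show "(d X k)\<^sup>2 \<le> (K / q X)\<^sup>2" using d_nonneg by (simp add: power_mono)
  qed
  have L_bounded: "L k \<le> C" for k
  proof (induction k)
    case 0
    have "0 \<le> B" unfolding B_def by (simp add: sum_nonneg)
    then show ?case by (simp add: L_def d0 C_def sum_nonneg)
  next
    case (Suc k)
    show ?case
    proof (cases "W k < K")
      case True
      then show ?thesis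
        using L_step[of k] L_small[of k] mult_nonneg_nonneg[of "2 * \<epsilon>" "W k"] \<epsilon> W_nonneg[of k]
        by linarith
    next
      case False
      then have "B \<le> 2 * \<epsilon> * W k" using \<epsilon> unfolding K_def by (simp add: field_simps)
      then show ?thesis using L_step[of k] Suc by linarith
    qed
  qed
  have "d X k \<le> sqrt C" if "X \<in> S" for X k
  proof (rule real_le_rsqrt)
    have "(d X k)\<^sup>2 \<le> L k" unfolding L_def using that fin by (intro member_le_sum) auto
    with L_bounded[of k] show "(d X k)\<^sup>2 \<le> C" by linarith
  qed
  then show ?thesis using that by blast
qed

lemma liminf_average_ge:
  fixes cum :: "nat \<Rightarrow> real" and q D :: real and T :: nat
  assumes T: "T > 0" and q: "q > 0"
    and mono: "\<And>t k. k * T \<le> t \<Longrightarrow> cum (k * T) \<le> cum t"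
    and frames: "\<And>k. real k * q - D \<le> cum (k * T)"
  shows "ereal q \<le> liminf (\<lambda>t. ereal (cum t / (real t / real T)))"
proof -
  define c where "c = (q + D) * T"
  have "(\<lambda>t. c / real t) \<longlonglongrightarrow> 0"
    by (intro tendsto_divide_0[OF tendsto_const] filterlim_at_top_imp_at_infinity
        filterlim_real_sequentially)
  then have "(\<lambda>t. ereal (q - c / real t)) \<longlonglongrightarrow> ereal (q - 0)"
    by (intro tendsto_ereal tendsto_diff tendsto_const)
  then have "ereal q = liminf (\<lambda>t. ereal (q - c / real t))"
    using lim_imp_Liminf[OF trivial_limit_sequentially] by (metis diff_zero)
  also have "\<dots> \<le> liminf (\<lambda>t. ereal (cum t / (real t / real T)))"
  proof (intro Liminf_mono eventually_sequentiallyI[of 1])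
    fix t :: nat assume "1 \<le> t"
    define k where "k = t div T"
    have "k * T \<le> t" unfolding k_def by simp
    with frames[of k] mono have "real k * q - D \<le> cum t" by (meson order_trans)
    then have "(real k * q - D) * real T \<le> cum t * real T" by (simp add: mult_right_mono)
    moreover have "t < k * T + T"
      using div_mult_mod_eq[of t T] mod_less_divisor[OF T, of t] unfolding k_def by linarith
    then have "q * real t \<le> q * ((real k + 1) * real T)"
      using q by (intro mult_left_mono) (auto simp: distrib_right simp flip: of_nat_mult of_nat_add)
    moreover have "q * ((real k + 1) * real T) - c = (real k * q - D) * real T"
      unfolding c_def by (simp add: algebra_simps)
    ultimately have "q * real t - c \<le> cum t * real T" by linarith
    have "q - c / real t = (q * real t - c) / real t"
      using \<open>1 \<le> t\<close> by (simp add: field_simps)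
    also have "\<dots> \<le> cum t * real T / real t"
      using \<open>q * real t - c \<le> cum t * real T\<close> by (simp add: divide_right_mono)
    finally show "ereal (q - c / real t) \<le> ereal (cum t / (real t / real T))" by simp
  qed
  finally show ?thesis .
qed

lemma avg_reward_ge_of_debt_bounded:
  assumes "frame_len S tau > 0" "tau X > 0"
    and "\<forall>i j. 1 \<le> i \<longrightarrow> i \<le> j \<longrightarrow> j \<le> tau X \<longrightarrow> r X j \<le> r X i"
    and "\<forall>i. 1 \<le> i \<longrightarrow> i \<le> tau X \<longrightarrow> 0 \<le> r X i"
    and "q X > 0"
    and bounded: "\<And>k. debt S tau r q \<sigma> X k \<le> D"
  shows "ereal (q X) \<le> avg_reward S tau r \<sigma> X"
  unfolding avg_reward_def
proof (rule liminf_average_ge[OF assms(1,5)])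
  fix k t assume "k * frame_len S tau \<le> t"
  then show "cum_reward tau r \<sigma> X (k * frame_len S tau) \<le> cum_reward tau r \<sigma> X t"
    unfolding cum_reward_def
    by (intro sum_mono2) (auto intro: slot_reward_bounds(1)[of tau X r, OF assms(2-4)])
next
  fix k
  show "real k * q X - D \<le> cum_reward tau r \<sigma> X (k * frame_len S tau)"
    using debt_ge[of k q X S tau r \<sigma>] bounded[of k] unfolding cum_reward_frames by linarith
qed

lemma avg_reward_ge_of_debt_drift:
  assumes "finite S" "\<forall>X\<in>S. tau X > 0"
    and "\<forall>X\<in>S. \<forall>i j. 1 \<le> i \<longrightarrow> i \<le> j \<longrightarrow> j \<le> tau X \<longrightarrow> r X j \<le> r X i"
    and "\<forall>X\<in>S. \<forall>i. 1 \<le> i \<longrightarrow> i \<le> tau X \<longrightarrow> 0 \<le> r X i"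
    and q: "\<forall>X\<in>S. q X > 0" and \<epsilon>: "\<epsilon> > 0"
    and drift: "\<And>k. (1 + \<epsilon>) * (\<Sum>X\<in>S. q X * debt S tau r q \<sigma> X k)
      \<le> (\<Sum>X\<in>S. frame_reward S tau r \<sigma> X (Suc k) * debt S tau r q \<sigma> X k)"
    and "X \<in> S"
  shows "ereal (q X) \<le> avg_reward S tau r \<sigma> X"
proof -
  let ?d = "\<lambda>X k. debt S tau r q \<sigma> X k"
  let ?g = "\<lambda>X k. frame_reward S tau r \<sigma> X (Suc k)"
  obtain D where D: "\<And>k X. X \<in> S \<Longrightarrow> ?d X k \<le> D"
  proof (rule queues_bounded_of_drift[where d = ?d and g = ?g and q = q
        and G = "\<lambda>X. real (frame_len S tau) * r X 1", OF assms(1) _ _ _ _ \<epsilon> drift])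
    show "0 \<le> ?g X k \<and> ?g X k \<le> real (frame_len S tau) * r X 1" if "X \<in> S" for X k
      using frame_reward_bounds[of tau X r S \<sigma> "Suc k"] assms(2-4) that by simp
  qed (use q in auto)
  then show ?thesis
    using assms(2-5,8)
    by (intro avg_reward_ge_of_debt_bounded[OF frame_len_pos[OF assms(1,2)], where D = D]) auto
qed

lemma feasible_weighted_sum_le_Sup:
  assumes "finite S" "\<forall>X\<in>S. tau X > 0"
    and "\<forall>X\<in>S. \<forall>i j. 1 \<le> i \<longrightarrow> i \<le> j \<longrightarrow> j \<le> tau X \<longrightarrow> r X j \<le> r X i"
    and "\<forall>X\<in>S. \<forall>i. 1 \<le> i \<longrightarrow> i \<le> tau X \<longrightarrow> 0 \<le> r X i"
    and w: "\<And>X. X \<in> S \<Longrightarrow> 0 \<le> w X"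
    and "feasible_vec S tau r v"
  shows "(\<Sum>X\<in>S. v X * w X) \<le> Sup {\<Sum>X\<in>S. v' X * w X | v'. feasible_vec S tau r v'}"
proof (rule cSup_upper)
  show "bdd_above {\<Sum>X\<in>S. v' X * w X | v'. feasible_vec S tau r v'}"
  proof (rule bdd_aboveI, clarify)
    fix v' assume "feasible_vec S tau r v'"
    then show "(\<Sum>X\<in>S. v' X * w X) \<le> (\<Sum>X\<in>S. real (frame_len S tau) * r X 1 * w X)"
      using assms(1-4) w frame_len_pos[OF assms(1,2)]
      by (intro sum_mono mult_right_mono feasible_le_frame_bound) (auto simp: feasible_vec_def)
  qed
qed (use assms(6) in blast)

theorem theorem6:
  fixes S :: "'a set" and tau :: "'a \<Rightarrow> nat" and r :: "'a \<Rightarrow> nat \<Rightarrow> real" and p :: real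
    and \<eta> :: "('a \<Rightarrow> real) \<Rightarrow> ('a \<Rightarrow> real) \<Rightarrow> 'a schedule pmf"
  assumes "finite S"
    and "\<forall>X\<in>S. tau X > 0"
    and "\<forall>X\<in>S. \<forall>i j. 1 \<le> i \<longrightarrow> i \<le> j \<longrightarrow> j \<le> tau X \<longrightarrow> r X j \<le> r X i"
    and "\<forall>X\<in>S. \<forall>i. 1 \<le> i \<longrightarrow> i \<le> tau X \<longrightarrow> 0 \<le> r X i"
    and "p > 1"
    and "state_policy_wf S tau \<eta>"
    and "\<forall>q. (\<forall>X\<in>S. q X > 0) \<longrightarrow> (\<forall>\<sigma>. realizable S tau r \<eta> q \<sigma> \<longrightarrow> (\<forall>k.
           (\<Sum>X\<in>S. frame_reward S tau r \<sigma> X (Suc k) * debt S tau r q \<sigma> X k)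
             \<ge> (1 / p) * Sup {\<Sum>X\<in>S. v X * debt S tau r q \<sigma> X k | v. feasible_vec S tau r v}))"
  shows "p_approximation S tau r p \<eta>"
  unfolding p_approximation_def policy_fulfills_def
proof (intro allI impI, elim conjE)
  note reward = assms(1-4) and approx = assms(7)
  fix q :: "'a \<Rightarrow> real" and M
  assume q: "\<forall>X\<in>S. q X > 0" and "strictly_feasible S tau r (\<lambda>X. p * q X)"
    and realizable: "AE \<sigma> in M. realizable S tau r \<eta> q \<sigma>"
  then obtain \<epsilon> where \<epsilon>: "\<epsilon> > 0" and "feasible S tau r (\<lambda>X. (1 + \<epsilon>) * (p * q X))"
    unfolding strictly_feasible_def by blast
  with q \<open>p > 1\<close> have v: "feasible_vec S tau r (\<lambda>X. (1 + \<epsilon>) * (p * q X))"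
    unfolding feasible_vec_def by auto
  have drift: "(1 + \<epsilon>) * (\<Sum>X\<in>S. q X * debt S tau r q \<sigma> X k)
      \<le> (\<Sum>X\<in>S. frame_reward S tau r \<sigma> X (Suc k) * debt S tau r q \<sigma> X k)"
    if "realizable S tau r \<eta> q \<sigma>" for \<sigma> k
  proof -
    let ?d = "\<lambda>X. debt S tau r q \<sigma> X k"
    have "(1 + \<epsilon>) * (\<Sum>X\<in>S. q X * ?d X) = 1 / p * (\<Sum>X\<in>S. (1 + \<epsilon>) * (p * q X) * ?d X)"
      using \<open>p > 1\<close> by (simp add: sum_distrib_left)
    also have "\<dots> \<le> 1 / p * Sup {\<Sum>X\<in>S. v X * ?d X | v. feasible_vec S tau r v}"
      using feasible_weighted_sum_le_Sup[of S tau r ?d, OF reward debt_nonneg v] \<open>p > 1\<close>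
      by (simp add: divide_right_mono)
    also have "\<dots> \<le> (\<Sum>X\<in>S. frame_reward S tau r \<sigma> X (Suc k) * ?d X)"
      using approx q that by blast
    finally show ?thesis .
  qed
  show "fulfills_law S tau r q M"
    unfolding fulfills_law_def using realizable
    by (rule eventually_mono) (use avg_reward_ge_of_debt_drift[OF reward q \<epsilon> drift] in blast)
qed

end
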